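(* For $s\ge1$ let $E(s,0)$ be the number of pairs $(U,W)$ of $p$-strings of length $s$ whose meander graph $\Gamma^1_{2s-1}$ has no pierced circle. Then $\frac{E(s,0)}{C_s^2}\to 0$ as $s\to\infty$.
   Context: A $p$-string of length $s$ is a correctly matched (balanced) string of $s$ left and $s$ right parentheses; there are $C_s=\frac{1}{s+1}\binom{2s}{s}$ of them. Given two $p$-strings $U$ (upper) and $W$ (lower) of length $s$, the meander graph $\Gamma^1_{2s-1}$ is obtained by marking points $0,1,\dots,2s$ on the $x$-axis, taking the segment $[0,2s]$, joining points $a,b$ by an upper semicircle for each matched pair of $U$ at positions $a<b$ (positions $1,\dots,2s$), and joining points $a-1,b-1$ by a lower semicircle for each matched pair of $W$ at positions $a<b$; the vertices are the points $1,\dots,2s-1$. A pierced circle at position $i$ ($1\le i\le 2s-2$) is present if vertices $i$ and $i+1$ are joined both by an upper and by a lower semicircle. *)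

theory Defs
  imports Complex_Main
begin

text \<open>A parenthesis string is a bool list: True = left parenthesis, False = right.\<close>

definition height :: "bool list \<Rightarrow> int" where
  "height xs = (\<Sum>x\<leftarrow>xs. if x then 1 else -1)"

definition balanced :: "bool list \<Rightarrow> bool" where
  "balanced xs \<longleftrightarrow> (\<forall>k\<le>length xs. height (take k xs) \<ge> 0) \<and> height xs = 0"

definition pstring :: "nat \<Rightarrow> bool list \<Rightarrow> bool" where
  "pstring s xs \<longleftrightarrow> length xs = 2 * s \<and> balanced xs"

text \<open>Positions a < b (1-indexed) form a matched pair of the string U.\<close>
definition matched :: "bool list \<Rightarrow> nat \<Rightarrow> nat \<Rightarrow> bool" where
  "matched U a b \<longleftrightarrow> 1 \<le> a \<and> a < b \<and> b \<le> length U \<and> U ! (a - 1) \<and> \<not> U ! (b - 1)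
      \<and> balanced (take (b - a - 1) (drop a U))"

text \<open>Pierced circle at i: vertices i, i+1 joined by an upper semicircle (U pair (i,i+1))
  and by a lower semicircle (W pair (i+1,i+2), shifted down by one).\<close>
definition pierced :: "nat \<Rightarrow> bool list \<Rightarrow> bool list \<Rightarrow> nat \<Rightarrow> bool" where
  "pierced s U W i \<longleftrightarrow> 1 \<le> i \<and> i \<le> 2 * s - 2 \<and> matched U i (i + 1) \<and> matched W (i + 1) (i + 2)"

definition E0 :: "nat \<Rightarrow> nat" where
  "E0 s = card {(U, W). pstring s U \<and> pstring s W \<and> \<not> (\<exists>i. pierced s U W i)}"

definition catalan :: "nat \<Rightarrow> real" where
  "catalan s = real ((2 * s) choose s) / real (s + 1)"

end

theory Submission
  imports Defs "HOL-Real_Asymp.Real_Asymp"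
begin

text \<open>Cut both strings into consecutive windows of length 4. A window in which U reads
  \<open>()\<close> at its first two places and W reads \<open>()\<close> at its second and third places carries a
  pierced circle, so a pair without pierced circles avoids one of the 256 possible window
  contents in each of roughly s/2 windows. Hence E(s,0) = O((255/256)^(s/2) 16^s), whereas
  C_s^2 \<ge> 16^s / (4 s^2 (s+1)^2) by the central binomial bound, and the ratio tends to 0
  geometrically.\<close>

definition avoiding_blocks :: "'a set \<Rightarrow> 'a list \<Rightarrow> nat \<Rightarrow> nat \<Rightarrow> 'a list set" where
  "avoiding_blocks A w m n =
     {xs. set xs \<subseteq> A \<and> length xs = length w * m + n \<and>
          (\<forall>i<m. take (length w) (drop (length w * i) xs) \<noteq> w)}"

lemma finite_avoiding_blocks: "finite A \<Longrightarrow> finite (avoiding_blocks A w m n)"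
  by (rule finite_subset[OF _ finite_lists_length_eq]) (auto simp: avoiding_blocks_def)

lemma avoiding_blocks_Suc_subset:
  "avoiding_blocks A w (Suc m) n \<subseteq>
     (\<lambda>(u, v). u @ v) ` (({u. set u \<subseteq> A \<and> length u = length w} - {w}) \<times> avoiding_blocks A w m n)"
proof
  fix xs assume xs: "xs \<in> avoiding_blocks A w (Suc m) n"
  let ?k = "length w"
  have "take ?k (drop (?k * i) (drop ?k xs)) \<noteq> w" if "i < m" for i
    using xs that by (auto simp: avoiding_blocks_def add.commute dest!: spec[of _ "Suc i"])
  then have "drop ?k xs \<in> avoiding_blocks A w m n"
    using xs by (auto simp: avoiding_blocks_def dest: in_set_dropD)
  moreover have "take ?k xs \<in> {u. set u \<subseteq> A \<and> length u = ?k} - {w}"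
    using xs by (auto simp: avoiding_blocks_def dest: in_set_takeD dest!: spec[of _ 0])
  ultimately show "xs \<in> (\<lambda>(u, v). u @ v) `
      (({u. set u \<subseteq> A \<and> length u = ?k} - {w}) \<times> avoiding_blocks A w m n)"
    by (auto intro!: image_eqI[of _ _ "(take ?k xs, drop ?k xs)"])
qed

lemma card_avoiding_blocks_le:
  assumes "finite A" and "set w \<subseteq> A"
  shows "card (avoiding_blocks A w m n) \<le> (card A ^ length w - 1) ^ m * card A ^ n"
proof (induction m)
  case 0
  have "avoiding_blocks A w 0 n = {xs. set xs \<subseteq> A \<and> length xs = n}"
    by (auto simp: avoiding_blocks_def)
  then show ?case by (simp add: card_lists_length_eq[OF assms(1)])
next
  case (Suc m)
  let ?Words = "{u. set u \<subseteq> A \<and> length u = length w}"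
  have fin: "finite ((?Words - {w}) \<times> avoiding_blocks A w m n)"
    using assms(1) by (simp add: finite_lists_length_eq finite_avoiding_blocks)
  have "card (avoiding_blocks A w (Suc m) n) \<le> card ((?Words - {w}) \<times> avoiding_blocks A w m n)"
    using card_mono[OF finite_imageI[OF fin] avoiding_blocks_Suc_subset]
      card_image_le[OF fin, of "\<lambda>(u, v). u @ v"]
    by linarith
  also have "\<dots> = (card A ^ length w - 1) * card (avoiding_blocks A w m n)"
    using assms by (simp add: card_cartesian_product card_Diff_singleton card_lists_length_eq)
  also have "\<dots> \<le> (card A ^ length w - 1) ^ Suc m * card A ^ n"
    using Suc.IH by simp
  finally show ?case .
qed

lemma matched_adjacent_iff:
  "matched U a (Suc a) \<longleftrightarrow> 1 \<le> a \<and> a < length U \<and> U ! (a - 1) \<and> \<not> U ! a"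
  by (auto simp: matched_def balanced_def height_def)

lemma pierced_if_window:
  assumes "pstring s U" "pstring s W" "j + 3 \<le> 2 * s"
    and "U ! j" "\<not> U ! (j + 1)" "W ! (j + 1)" "\<not> W ! (j + 2)"
  shows "pierced s U W (j + 1)"
  using assms by (simp add: pierced_def pstring_def numeral_eq_Suc matched_adjacent_iff)

lemma E0_le: "E0 s \<le> 16 * 255 ^ (s div 2)"
proof -
  \<comment> \<open>A pair of strings of equal length is read as a single word over \<open>bool \<times> bool\<close>.\<close>
  define w where "w = zip [True, False, False, False] [False, True, False, False]"
  define m where "m = s div 2"
  have len_w: "length w = 4" by (simp add: w_def)
  have card_pairs: "card (UNIV :: (bool \<times> bool) set) = 4"
    by (simp add: card_cartesian_product flip: UNIV_Times_UNIV)
  let ?Avoid = "avoiding_blocks (UNIV :: (bool \<times> bool) set) w m (2 * (s mod 2))"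
  have "{(U, W). pstring s U \<and> pstring s W \<and> \<not> (\<exists>i. pierced s U W i)}
          \<subseteq> (\<lambda>xs. (map fst xs, map snd xs)) ` ?Avoid"
  proof safe
    fix U W
    assume U: "pstring s U" and W: "pstring s W" and no_pierced: "\<not> (\<exists>i. pierced s U W i)"
    have len: "length U = 2 * s" "length W = 2 * s" using U W by (auto simp: pstring_def)
    have "take 4 (drop (4 * i) (zip U W)) \<noteq> w" if "i < m" for i
    proof
      assume window: "take 4 (drop (4 * i) (zip U W)) = w"
      have "4 * i + 4 \<le> 2 * s" using that by (simp add: m_def)
      then have "zip U W ! (4 * i + j) = w ! j" if "j < 4" for j
        using that arg_cong[OF window, of "\<lambda>xs. xs ! j"] len by simp
      from this[of 0] this[of 1] this[of 2] \<open>4 * i + 4 \<le> 2 * s\<close> len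
      have "pierced s U W (4 * i + 1)"
        by (intro pierced_if_window[OF U W]) (auto simp: w_def)
      with no_pierced show False by blast
    qed
    moreover have "2 * s = 4 * m + 2 * (s mod 2)" by (simp add: m_def) presburger
    ultimately have "zip U W \<in> ?Avoid"
      using len by (simp add: avoiding_blocks_def len_w)
    then show "(U, W) \<in> (\<lambda>xs. (map fst xs, map snd xs)) ` ?Avoid"
      using len by (auto intro!: image_eqI[of _ _ "zip U W"])
  qed
  then have "E0 s \<le> card ?Avoid"
    unfolding E0_def using finite_avoiding_blocks[of UNIV]
    by (meson card_image_le card_mono finite_UNIV finite_imageI le_trans)
  also have "\<dots> \<le> 255 ^ m * 4 ^ (2 * (s mod 2))"
    using card_avoiding_blocks_le[of "UNIV :: (bool \<times> bool) set" w] card_pairs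
    by (simp add: len_w)
  also have "\<dots> \<le> 16 * 255 ^ m"
    by (cases "even s") (simp_all add: mod2_eq_if)
  finally show ?thesis by (simp add: m_def)
qed

lemma catalan_lower_bound:
  assumes "0 < s"
  shows "4 ^ s / (2 * real s * (real s + 1)) \<le> catalan s"
proof -
  have "4 ^ s / (2 * real s * (real s + 1)) = 4 ^ s / (2 * real s) / (real s + 1)"
    by simp
  also have "\<dots> \<le> real ((2 * s) choose s) / (real s + 1)"
    using central_binomial_lower_bound[OF assms] by (intro divide_right_mono) auto
  finally show ?thesis by (simp add: catalan_def add.commute)
qed

lemma E0_over_catalan_squared_le:
  assumes "0 < s"
  shows "real (E0 s) / (catalan s)\<^sup>2
           \<le> 64 * real s ^ 2 * (real s + 1) ^ 2 * (255 / 256) powr ((real s - 1) / 2)"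
proof -
  define m where "m = s div 2"
  define lower where "lower = 4 ^ s / (2 * real s * (real s + 1))"
  have "0 < lower" using assms by (simp add: lower_def)
  then have "lower\<^sup>2 \<le> (catalan s)\<^sup>2"
    using catalan_lower_bound[OF assms] by (simp add: lower_def power_mono)
  moreover have "real (E0 s) \<le> 16 * 255 ^ m"
    using E0_le[of s] unfolding m_def by (metis of_nat_le_iff of_nat_mult of_nat_numeral of_nat_power)
  ultimately have "real (E0 s) / (catalan s)\<^sup>2 \<le> 16 * 255 ^ m / lower\<^sup>2"
    using \<open>0 < lower\<close> by (intro frac_le) auto
  also have "\<dots> = 64 * real s ^ 2 * (real s + 1) ^ 2 * (255 ^ m / 16 ^ s)"
    using assms by (simp add: lower_def field_simps power2_eq_square flip: power_mult_distrib)
  also have "255 ^ m / 16 ^ s \<le> (255 / 256 :: real) powr ((real s - 1) / 2)"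
  proof -
    have "(256 :: real) ^ m \<le> 16 ^ s"
      using power_increasing[of "2 * m" s "16 :: real"] by (simp add: m_def power_mult)
    then have "255 ^ m / 16 ^ s \<le> (255 / 256 :: real) ^ m"
      by (simp add: power_divide frac_le)
    also have "\<dots> \<le> (255 / 256) powr ((real s - 1) / 2)"
      using powr_mono'[of "(real s - 1) / 2" "real m" "255 / 256 :: real"]
      by (simp add: m_def powr_realpow)
    finally show ?thesis .
  qed
  finally show ?thesis by (simp add: mult_left_mono)
qed

theorem proposition4p3:
  shows "(\<lambda>s. real (E0 s) / (catalan s)\<^sup>2) \<longlonglongrightarrow> 0"
proof (rule tendsto_sandwich[OF _ _ tendsto_const])
  show "(\<lambda>s. 64 * real s ^ 2 * (real s + 1) ^ 2 * (255 / 256) powr ((real s - 1) / 2))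
          \<longlonglongrightarrow> 0"
    by real_asymp
  show "\<forall>\<^sub>F s in sequentially. 0 \<le> real (E0 s) / (catalan s)\<^sup>2"
    by simp
  show "\<forall>\<^sub>F s in sequentially. real (E0 s) / (catalan s)\<^sup>2
          \<le> 64 * real s ^ 2 * (real s + 1) ^ 2 * (255 / 256) powr ((real s - 1) / 2)"
    using eventually_gt_at_top[of 0] by eventually_elim (rule E0_over_catalan_squared_le)
qed

end
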